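(* For every orthomodular lattice $X$ there is a bijection $\mathrm{char}:\mathrm{KSub}(X)\to\mathbf{OMLatGal}(2,X)$, sending the kernel $a:\downarrow a\to X$ to the morphism $\bar a:2\to X$ with $\bar a_*(0)=1$, $\bar a_*(1)=a^\perp$, $\bar a^*(x)=1$ if $x\le a^\perp$ and $0$ otherwise. It is natural: for every morphism $f:X\to Y$ of $\mathbf{OMLatGal}$, $\mathrm{char}\circ\exists_f=(f\circ-)\circ\mathrm{char}$, i.e. $\mathrm{char}(\exists_f(m))=f\circ\mathrm{char}(m)$ for all $m\in\mathrm{KSub}(X)$.
   Context: An orthomodular lattice is a bounded lattice with an order-reversing involution $x\mapsto x^\perp$ such that $x\wedge x^\perp=0$, $x\vee x^\perp=1$, and $x\le y$ implies $y=x\vee(x^\perp\wedge y)$. $2=\{0,1\}$ is the two-element Boolean algebra. The category $\mathbf{OMLatGal}$ has orthomodular lattices as objects; a morphism $f:X\to Y$ is a pair $(f_*,f^* )$ of order-reversing functions $f_*:X\to Y$, $f^*:Y\to X$ such that $y\le f_*(x)$ iff $x\le f^*(y)$. Identity: both components $x\mapsto x^\perp$. Composition: $(g\circ f)_*=g_*\circ(-)^\perp\circ f_*$, $(g\circ f)^*=f^*\circ(-)^\perp\circ g^*$. Dagger: $(f_*,f^* )^\dagger=(f^*,f_* )$. It is a dagger kernel category (zero object the one-element lattice); for $a\in X$, $\downarrow a=\{u\le a\}$ with complement $u^{\perp_a}=a\wedge u^\perp$, and the downset morphism $a:\downarrow a\to X$ ($a_*(u)=u^\perp$, $a^*(x)=a\wedge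 x^\perp$) is a dagger kernel; every kernel into $X$ is isomorphic to exactly one such. $\mathrm{KSub}(X)$ denotes the poset of dagger-mono kernels into $X$ modulo isomorphism. In a dagger kernel category $\mathrm{coker}(g)=\ker(g^\dagger)^\dagger$ and $\exists_f(m)=\ker(\mathrm{coker}(f\circ m))$. *)

theory Defs
  imports Main
begin

record 'a oml =
  carrier :: "'a set"
  le :: "'a \<Rightarrow> 'a \<Rightarrow> bool"
  orth :: "'a \<Rightarrow> 'a"

definition top :: "'a oml \<Rightarrow> 'a" where
  "top X = (THE t. t \<in> carrier X \<and> (\<forall>x\<in>carrier X. le X x t))"

definition bot :: "'a oml \<Rightarrow> 'a" where
  "bot X = (THE b. b \<in> carrier X \<and> (\<forall>x\<in>carrier X. le X b x))"

definition meet :: "'a oml \<Rightarrow> 'a \<Rightarrow> 'a \<Rightarrow> 'a" where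
  "meet X x y = (THE z. z \<in> carrier X \<and> le X z x \<and> le X z y \<and>
      (\<forall>w\<in>carrier X. le X w x \<and> le X w y \<longrightarrow> le X w z))"

definition join :: "'a oml \<Rightarrow> 'a \<Rightarrow> 'a \<Rightarrow> 'a" where
  "join X x y = (THE z. z \<in> carrier X \<and> le X x z \<and> le X y z \<and>
      (\<forall>w\<in>carrier X. le X x w \<and> le X y w \<longrightarrow> le X z w))"

definition is_oml :: "'a oml \<Rightarrow> bool" where
  "is_oml X \<longleftrightarrow>
     (\<forall>x\<in>carrier X. le X x x) \<and>
     (\<forall>x\<in>carrier X. \<forall>y\<in>carrier X. le X x y \<and> le X y x \<longrightarrow> x = y) \<and>
     (\<forall>x\<in>carrier X. \<forall>y\<in>carrier X. \<forall>z\<in>carrier X. le X x y \<and> le X y z \<longrightarrow> le X x z) \<and>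
     (\<forall>x\<in>carrier X. \<forall>y\<in>carrier X. \<exists>z\<in>carrier X. le X z x \<and> le X z y \<and>
         (\<forall>w\<in>carrier X. le X w x \<and> le X w y \<longrightarrow> le X w z)) \<and>
     (\<forall>x\<in>carrier X. \<forall>y\<in>carrier X. \<exists>z\<in>carrier X. le X x z \<and> le X y z \<and>
         (\<forall>w\<in>carrier X. le X x w \<and> le X y w \<longrightarrow> le X z w)) \<and>
     (\<exists>t\<in>carrier X. \<forall>x\<in>carrier X. le X x t) \<and>
     (\<exists>b\<in>carrier X. \<forall>x\<in>carrier X. le X b x) \<and>
     (\<forall>x\<in>carrier X. orth X x \<in> carrier X) \<and>
     (\<forall>x\<in>carrier X. orth X (orth X x) = x) \<and>
     (\<forall>x\<in>carrier X. \<forall>y\<in>carrier X. le X x y \<longrightarrow> le X (orth X y) (orth X x)) \<and>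
     (\<forall>x\<in>carrier X. meet X x (orth X x) = bot X) \<and>
     (\<forall>x\<in>carrier X. join X x (orth X x) = top X) \<and>
     (\<forall>x\<in>carrier X. \<forall>y\<in>carrier X. le X x y \<longrightarrow> y = join X x (meet X (orth X x) y))"

text \<open>The two-element Boolean algebra 2 = {0,1}, with 0 = False, 1 = True.\<close>
definition two :: "bool oml" where
  "two = \<lparr>carrier = UNIV, le = (\<lambda>x y. x \<longrightarrow> y), orth = Not\<rparr>"

text \<open>A morphism X \<rightarrow> Y is a pair (f_*, f^*). Components are normalised to
  be undefined outside the carriers, so that equality of morphisms is plain equality.\<close>
type_synonym ('a, 'b) mor = "('a \<Rightarrow> 'b) \<times> ('b \<Rightarrow> 'a)"

definition hom :: "'a oml \<Rightarrow> 'b oml \<Rightarrow> ('a, 'b) mor set" where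
  "hom X Y = {f.
     (\<forall>x\<in>carrier X. fst f x \<in> carrier Y) \<and>
     (\<forall>y\<in>carrier Y. snd f y \<in> carrier X) \<and>
     (\<forall>x\<in>carrier X. \<forall>x'\<in>carrier X. le X x x' \<longrightarrow> le Y (fst f x') (fst f x)) \<and>
     (\<forall>y\<in>carrier Y. \<forall>y'\<in>carrier Y. le Y y y' \<longrightarrow> le X (snd f y') (snd f y)) \<and>
     (\<forall>x\<in>carrier X. \<forall>y\<in>carrier Y. le Y y (fst f x) \<longleftrightarrow> le X x (snd f y)) \<and>
     (\<forall>x. x \<notin> carrier X \<longrightarrow> fst f x = undefined) \<and>
     (\<forall>y. y \<notin> carrier Y \<longrightarrow> snd f y = undefined)}"

definition comp :: "'a oml \<Rightarrow> 'b oml \<Rightarrow> 'c oml \<Rightarrow> ('b, 'c) mor \<Rightarrow> ('a, 'b) mor \<Rightarrow> ('a, 'c) mor" where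
  "comp X Y Z g f =
     (\<lambda>x. if x \<in> carrier X then fst g (orth Y (fst f x)) else undefined,
      \<lambda>z. if z \<in> carrier Z then snd f (orth Y (snd g z)) else undefined)"

definition dagger :: "('a, 'b) mor \<Rightarrow> ('b, 'a) mor" where
  "dagger f = (snd f, fst f)"

definition zero_obj :: "unit oml" where
  "zero_obj = \<lparr>carrier = UNIV, le = (\<lambda>_ _. True), orth = id\<rparr>"

definition to_zero :: "'a oml \<Rightarrow> ('a, unit) mor" where
  "to_zero X = (\<lambda>x. if x \<in> carrier X then () else undefined, \<lambda>_. top X)"

definition from_zero :: "'b oml \<Rightarrow> (unit, 'b) mor" where
  "from_zero Y = (\<lambda>_. top Y, \<lambda>y. if y \<in> carrier Y then () else undefined)"

definition zero_mor :: "'a oml \<Rightarrow> 'b oml \<Rightarrow> ('a, 'b) mor" where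
  "zero_mor X Y = comp X zero_obj Y (from_zero Y) (to_zero X)"

definition down :: "'a oml \<Rightarrow> 'a \<Rightarrow> 'a oml" where
  "down X a = \<lparr>carrier = {u \<in> carrier X. le X u a}, le = le X,
               orth = (\<lambda>u. meet X a (orth X u))\<rparr>"

definition downmor :: "'a oml \<Rightarrow> 'a \<Rightarrow> ('a, 'a) mor" where
  "downmor X a =
     (\<lambda>u. if u \<in> carrier (down X a) then orth X u else undefined,
      \<lambda>x. if x \<in> carrier X then meet X a (orth X x) else undefined)"

text \<open>KSub(X) is represented by carrier X: the element a stands for the class of
  the downset kernel a : \<down>a \<rightarrow> X (every kernel is isomorphic to exactly one such),
  ordered by factorisation, i.e. by the order of X.\<close>
definition ker_el :: "'a oml \<Rightarrow> 'b oml \<Rightarrow> ('a, 'b) mor \<Rightarrow> 'a" where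
  "ker_el X Y g = (THE a. a \<in> carrier X \<and>
       comp (down X a) X Y g (downmor X a) = zero_mor (down X a) Y \<and>
       (\<forall>b\<in>carrier X. comp (down X b) X Y g (downmor X b) = zero_mor (down X b) Y
            \<longrightarrow> le X b a))"

text \<open>\<exists>_f(m) = ker(coker(f \<circ> m)) with coker(g) = ker(g^\<dagger>)^\<dagger>.\<close>
definition ex_im :: "'a oml \<Rightarrow> 'b oml \<Rightarrow> ('a, 'b) mor \<Rightarrow> 'a \<Rightarrow> 'b" where
  "ex_im X Y f a =
     (let g = comp (down X a) X Y f (downmor X a);
          c = ker_el Y (down X a) (dagger g)
      in ker_el Y (down Y c) (dagger (downmor Y c)))"

definition char :: "'a oml \<Rightarrow> 'a \<Rightarrow> (bool, 'a) mor" where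
  "char X a = (\<lambda>b. if b then orth X a else top X,
               \<lambda>x. if x \<in> carrier X then le X x (orth X a) else undefined)"

end

theory Submission
  imports Defs
begin

text \<open>The image \<open>\<exists>\<^sub>f(m)\<close> is computed through the single observation that the kernel of a
  morphism \<open>g : Y \<rightarrow> Z\<close> is the downset of \<open>g\<^sup>*(1)\<close>: the composite \<open>g \<circ> b\<close> with a downset
  kernel has components \<open>g\<^sub>*\<close> restricted to \<open>\<down>b\<close> and \<open>b \<and> g\<^sup>*(-)\<close>, and by the Galois
  property both are constant exactly when \<open>b \<le> g\<^sup>*(1)\<close>. Applied twice this gives
  \<open>\<exists>\<^sub>f(m) = f\<^sub>*(m)\<^sup>\<perp>\<close>, after which naturality of \<open>char\<close> is a pointwise computation,
  and \<open>char\<close> is inverted by \<open>h \<mapsto> h\<^sub>*(1)\<^sup>\<perp>\<close>.\<close>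

lemma is_omlD:
  assumes "is_oml X"
  shows "\<forall>x\<in>carrier X. le X x x"
    and "\<forall>x\<in>carrier X. \<forall>y\<in>carrier X. le X x y \<and> le X y x \<longrightarrow> x = y"
    and "\<forall>x\<in>carrier X. \<forall>y\<in>carrier X. \<forall>z\<in>carrier X. le X x y \<and> le X y z \<longrightarrow> le X x z"
    and "\<forall>x\<in>carrier X. \<forall>y\<in>carrier X. \<exists>z\<in>carrier X. le X z x \<and> le X z y \<and>
           (\<forall>w\<in>carrier X. le X w x \<and> le X w y \<longrightarrow> le X w z)"
    and "\<exists>t\<in>carrier X. \<forall>x\<in>carrier X. le X x t"
    and "\<forall>x\<in>carrier X. orth X x \<in> carrier X"
    and "\<forall>x\<in>carrier X. orth X (orth X x) = x"
    and "\<forall>x\<in>carrier X. \<forall>y\<in>carrier X. le X x y \<longrightarrow> le X (orth X y) (orth X x)"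
  by (insert assms, unfold is_oml_def, (elim conjE, assumption)+)

lemma oml_refl: "is_oml X \<Longrightarrow> x \<in> carrier X \<Longrightarrow> le X x x"
  using is_omlD(1) by blast

lemma oml_antisym:
  "is_oml X \<Longrightarrow> x \<in> carrier X \<Longrightarrow> y \<in> carrier X \<Longrightarrow> le X x y \<Longrightarrow> le X y x \<Longrightarrow> x = y"
  using is_omlD(2) by blast

lemma oml_trans:
  "is_oml X \<Longrightarrow> x \<in> carrier X \<Longrightarrow> y \<in> carrier X \<Longrightarrow> z \<in> carrier X \<Longrightarrow>
    le X x y \<Longrightarrow> le X y z \<Longrightarrow> le X x z"
  using is_omlD(3) by blast

lemma oml_orth_closed: "is_oml X \<Longrightarrow> x \<in> carrier X \<Longrightarrow> orth X x \<in> carrier X"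
  using is_omlD(6) by blast

lemma oml_orth_orth: "is_oml X \<Longrightarrow> x \<in> carrier X \<Longrightarrow> orth X (orth X x) = x"
  using is_omlD(7) by blast

lemma oml_orth_antimono:
  "is_oml X \<Longrightarrow> x \<in> carrier X \<Longrightarrow> y \<in> carrier X \<Longrightarrow> le X x y \<Longrightarrow> le X (orth X y) (orth X x)"
  using is_omlD(8) by blast

lemma oml_le_orth_swap:
  "is_oml X \<Longrightarrow> x \<in> carrier X \<Longrightarrow> y \<in> carrier X \<Longrightarrow> le X x (orth X y) \<longleftrightarrow> le X y (orth X x)"
  by (metis oml_orth_closed oml_orth_antimono oml_orth_orth)

lemma oml_orth_le_swap:
  "is_oml X \<Longrightarrow> x \<in> carrier X \<Longrightarrow> y \<in> carrier X \<Longrightarrow> le X (orth X x) y \<longleftrightarrow> le X (orth X y) x"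
  by (metis oml_le_orth_swap oml_orth_closed oml_orth_orth)

lemma oml_meet:
  assumes X: "is_oml X" and x: "x \<in> carrier X" and y: "y \<in> carrier X"
  shows meet_closed: "meet X x y \<in> carrier X"
    and le_meet_iff: "\<And>w. w \<in> carrier X \<Longrightarrow> le X w (meet X x y) \<longleftrightarrow> le X w x \<and> le X w y"
proof -
  obtain z where z: "z \<in> carrier X" "le X z x" "le X z y"
      and greatest: "\<And>w. w \<in> carrier X \<Longrightarrow> le X w x \<Longrightarrow> le X w y \<Longrightarrow> le X w z"
    using bspec[OF bspec[OF is_omlD(4)[OF X] x] y] by blast
  have "meet X x y = z"
    unfolding meet_def
  proof (rule the_equality)
    fix z' assume z': "z' \<in> carrier X \<and> le X z' x \<and> le X z' y \<and>
      (\<forall>w\<in>carrier X. le X w x \<and> le X w y \<longrightarrow> le X w z')"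
    then have "le X z z'" using z by blast
    moreover have "le X z' z" using z' greatest by blast
    ultimately show "z' = z" using oml_antisym[OF X _ z(1)] z' by blast
  qed (simp add: z greatest)
  then show "meet X x y \<in> carrier X" using z(1) by simp
  fix w assume w: "w \<in> carrier X"
  show "le X w (meet X x y) \<longleftrightarrow> le X w x \<and> le X w y"
    unfolding \<open>meet X x y = z\<close>
    using greatest[OF w] oml_trans[OF X w z(1) x _ z(2)] oml_trans[OF X w z(1) y _ z(3)] by blast
qed

lemma meet_eq_left_iff:
  assumes X: "is_oml X" and x: "x \<in> carrier X" and y: "y \<in> carrier X"
  shows "meet X x y = x \<longleftrightarrow> le X x y"
proof
  assume "le X x y"
  then have "le X x (meet X x y)" using le_meet_iff[OF X x y x] oml_refl[OF X x] by simp
  moreover have "le X (meet X x y) x"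
    using le_meet_iff[OF X x y meet_closed[OF X x y]] oml_refl[OF X meet_closed[OF X x y]] by simp
  ultimately show "meet X x y = x" using oml_antisym[OF X meet_closed[OF X x y] x] by simp
qed (use le_meet_iff[OF X x y x] oml_refl[OF X x] in metis)

definition bounded_poset :: "'a oml \<Rightarrow> bool" where
  "bounded_poset Z \<longleftrightarrow>
     (\<forall>x\<in>carrier Z. le Z x x) \<and>
     (\<forall>x\<in>carrier Z. \<forall>y\<in>carrier Z. le Z x y \<and> le Z y x \<longrightarrow> x = y) \<and>
     (\<forall>x\<in>carrier Z. \<forall>y\<in>carrier Z. \<forall>z\<in>carrier Z. le Z x y \<and> le Z y z \<longrightarrow> le Z x z) \<and>
     (\<exists>t\<in>carrier Z. \<forall>x\<in>carrier Z. le Z x t)"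

lemma bounded_posetI:
  assumes "\<And>x. x \<in> carrier Z \<Longrightarrow> le Z x x"
    and "\<And>x y. x \<in> carrier Z \<Longrightarrow> y \<in> carrier Z \<Longrightarrow> le Z x y \<Longrightarrow> le Z y x \<Longrightarrow> x = y"
    and "\<And>x y z. x \<in> carrier Z \<Longrightarrow> y \<in> carrier Z \<Longrightarrow> z \<in> carrier Z \<Longrightarrow>
      le Z x y \<Longrightarrow> le Z y z \<Longrightarrow> le Z x z"
    and "t \<in> carrier Z" and "\<And>x. x \<in> carrier Z \<Longrightarrow> le Z x t"
  shows "bounded_poset Z"
  unfolding bounded_poset_def using assms by blast

lemma oml_bounded_poset: "is_oml X \<Longrightarrow> bounded_poset X"
  unfolding bounded_poset_def by (intro conjI is_omlD(1,2,3,5))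

lemma down_bounded_poset:
  assumes X: "is_oml X" and a: "a \<in> carrier X"
  shows "bounded_poset (down X a)"
proof (rule bounded_posetI[where t = a])
  fix x y z assume "x \<in> carrier (down X a)" "y \<in> carrier (down X a)" "z \<in> carrier (down X a)"
    and "le (down X a) x y" "le (down X a) y z"
  then show "le (down X a) x z" using oml_trans[OF X, of x y z] by (simp add: down_def)
qed (use a oml_refl[OF X] oml_antisym[OF X] in \<open>simp_all add: down_def\<close>)

lemma bounded_poset_antisym:
  "bounded_poset Z \<Longrightarrow> x \<in> carrier Z \<Longrightarrow> y \<in> carrier Z \<Longrightarrow> le Z x y \<Longrightarrow> le Z y x \<Longrightarrow> x = y"
  unfolding bounded_poset_def by blast

lemma top_eqI:
  assumes Z: "bounded_poset Z" and t: "t \<in> carrier Z" and above: "\<And>x. x \<in> carrier Z \<Longrightarrow> le Z x t"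
  shows "Defs.top Z = t"
  unfolding top_def
  by (rule the_equality) (use t above bounded_poset_antisym[OF Z _ t] in auto)

lemma
  assumes Z: "bounded_poset Z"
  shows top_closed: "Defs.top Z \<in> carrier Z"
    and le_top: "x \<in> carrier Z \<Longrightarrow> le Z x (Defs.top Z)"
proof -
  obtain t where "t \<in> carrier Z" "\<And>x. x \<in> carrier Z \<Longrightarrow> le Z x t"
    using Z unfolding bounded_poset_def by blast
  with top_eqI[OF Z] show "Defs.top Z \<in> carrier Z" "x \<in> carrier Z \<Longrightarrow> le Z x (Defs.top Z)"
    by simp_all
qed

lemma top_le_imp_eq:
  assumes Z: "bounded_poset Z" and x: "x \<in> carrier Z" and "le Z (Defs.top Z) x"
  shows "x = Defs.top Z"
  using bounded_poset_antisym[OF Z x top_closed[OF Z] le_top[OF Z x]] assms(3) .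

lemma top_down: "is_oml X \<Longrightarrow> a \<in> carrier X \<Longrightarrow> Defs.top (down X a) = a"
  by (rule top_eqI[OF down_bounded_poset]) (auto simp: down_def oml_refl)

lemma oml_orth_top_le: "is_oml X \<Longrightarrow> x \<in> carrier X \<Longrightarrow> le X (orth X (Defs.top X)) x"
  by (metis oml_bounded_poset le_top top_closed oml_le_orth_swap oml_orth_closed oml_orth_orth)

lemma homD:
  assumes "f \<in> hom X Y"
  shows hom_fst_closed: "\<And>x. x \<in> carrier X \<Longrightarrow> fst f x \<in> carrier Y"
    and hom_snd_closed: "\<And>y. y \<in> carrier Y \<Longrightarrow> snd f y \<in> carrier X"
    and hom_fst_antimono:
      "\<And>x x'. x \<in> carrier X \<Longrightarrow> x' \<in> carrier X \<Longrightarrow> le X x x' \<Longrightarrow> le Y (fst f x') (fst f x)"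
    and hom_snd_antimono:
      "\<And>y y'. y \<in> carrier Y \<Longrightarrow> y' \<in> carrier Y \<Longrightarrow> le Y y y' \<Longrightarrow> le X (snd f y') (snd f y)"
    and hom_galois:
      "\<And>x y. x \<in> carrier X \<Longrightarrow> y \<in> carrier Y \<Longrightarrow> le Y y (fst f x) \<longleftrightarrow> le X x (snd f y)"
    and hom_snd_undefined: "\<And>y. y \<notin> carrier Y \<Longrightarrow> snd f y = undefined"
  using assms unfolding hom_def by auto

lemma homI:
  assumes "\<And>x. x \<in> carrier X \<Longrightarrow> fst f x \<in> carrier Y"
    and "\<And>y. y \<in> carrier Y \<Longrightarrow> snd f y \<in> carrier X"
    and "\<And>x x'. x \<in> carrier X \<Longrightarrow> x' \<in> carrier X \<Longrightarrow> le X x x' \<Longrightarrow> le Y (fst f x') (fst f x)"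
    and "\<And>y y'. y \<in> carrier Y \<Longrightarrow> y' \<in> carrier Y \<Longrightarrow> le Y y y' \<Longrightarrow> le X (snd f y') (snd f y)"
    and "\<And>x y. x \<in> carrier X \<Longrightarrow> y \<in> carrier Y \<Longrightarrow> le Y y (fst f x) \<longleftrightarrow> le X x (snd f y)"
    and "\<And>x. x \<notin> carrier X \<Longrightarrow> fst f x = undefined"
    and "\<And>y. y \<notin> carrier Y \<Longrightarrow> snd f y = undefined"
  shows "f \<in> hom X Y"
  using assms unfolding hom_def by blast

lemma dagger_hom: "f \<in> hom X Y \<Longrightarrow> dagger f \<in> hom Y X"
  unfolding hom_def dagger_def by auto

lemma comp_hom:
  assumes Y: "is_oml Y" and f: "f \<in> hom X Y" and g: "g \<in> hom Y Z"
  shows "comp X Y Z g f \<in> hom X Z"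
proof (rule homI)
  fix x z assume x: "x \<in> carrier X" and z: "z \<in> carrier Z"
  have "le Z z (fst g (orth Y (fst f x))) \<longleftrightarrow> le Y (orth Y (fst f x)) (snd g z)"
    using hom_galois[OF g _ z] oml_orth_closed[OF Y hom_fst_closed[OF f x]] by blast
  also have "\<dots> \<longleftrightarrow> le Y (orth Y (snd g z)) (fst f x)"
    using oml_orth_le_swap[OF Y hom_fst_closed[OF f x] hom_snd_closed[OF g z]] .
  also have "\<dots> \<longleftrightarrow> le X x (snd f (orth Y (snd g z)))"
    using hom_galois[OF f x] oml_orth_closed[OF Y hom_snd_closed[OF g z]] by blast
  finally show "le Z z (fst (comp X Y Z g f) x) \<longleftrightarrow> le X x (snd (comp X Y Z g f) z)"
    using x z by (simp add: comp_def)
qed (use homD[OF f] homD[OF g] oml_orth_closed[OF Y] oml_orth_antimono[OF Y] in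
  \<open>auto simp: comp_def\<close>)

lemma downmor_hom:
  assumes X: "is_oml X" and a: "a \<in> carrier X"
  shows "downmor X a \<in> hom (down X a) X"
proof (rule homI)
  fix u x assume "u \<in> carrier (down X a)" and x: "x \<in> carrier X"
  then have u: "u \<in> carrier X" "le X u a" by (auto simp: down_def)
  have "le X x (orth X u) \<longleftrightarrow> le X u (meet X a (orth X x))"
    using le_meet_iff[OF X a oml_orth_closed[OF X x] u(1)] u oml_le_orth_swap[OF X x u(1)] by blast
  then show "le X x (fst (downmor X a) u) \<longleftrightarrow> le (down X a) u (snd (downmor X a) x)"
    using u x by (simp add: downmor_def down_def)
next
  fix x assume x: "x \<in> carrier X"
  have m: "meet X a (orth X x) \<in> carrier X"
    using meet_closed[OF X a oml_orth_closed[OF X x]] .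
  moreover have "le X (meet X a (orth X x)) a"
    using le_meet_iff[OF X a oml_orth_closed[OF X x] m] oml_refl[OF X m] by blast
  ultimately show "snd (downmor X a) x \<in> carrier (down X a)"
    using x by (simp add: downmor_def down_def)
next
  fix x x' assume x: "x \<in> carrier X" and x': "x' \<in> carrier X" and "le X x x'"
  then have "le X (orth X x') (orth X x)" by (rule oml_orth_antimono[OF X])
  then have "le X (meet X a (orth X x')) (meet X a (orth X x))"
    using oml_meet[OF X a] oml_orth_closed[OF X] oml_refl[OF X] oml_trans[OF X] x x' by metis
  then show "le (down X a) (snd (downmor X a) x') (snd (downmor X a) x)"
    using x x' by (simp add: downmor_def down_def)
qed (auto simp: downmor_def down_def oml_orth_closed[OF X] oml_orth_antimono[OF X])

lemma zero_mor_eq: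
  "zero_mor A B = (\<lambda>x. if x \<in> carrier A then Defs.top B else undefined,
                   \<lambda>z. if z \<in> carrier B then Defs.top A else undefined)"
  unfolding zero_mor_def comp_def from_zero_def to_zero_def zero_obj_def by auto

lemma comp_downmor_eq:
  assumes Y: "is_oml Y" and g: "g \<in> hom Y Z" and b: "b \<in> carrier Y"
  shows "comp (down Y b) Y Z g (downmor Y b) =
    (\<lambda>z. if z \<in> carrier (down Y b) then fst g z else undefined,
     \<lambda>w. if w \<in> carrier Z then meet Y b (snd g w) else undefined)"
  using hom_snd_closed[OF g] oml_orth_closed[OF Y] oml_orth_orth[OF Y]
  by (auto simp: comp_def downmor_def down_def fun_eq_iff)

lemma comp_downmor_eq_zero_iff:
  assumes Y: "is_oml Y" and Z: "bounded_poset Z" and g: "g \<in> hom Y Z" and b: "b \<in> carrier Y"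
  shows "comp (down Y b) Y Z g (downmor Y b) = zero_mor (down Y b) Z \<longleftrightarrow>
    le Y b (snd g (Defs.top Z))"
proof -
  have gt: "snd g (Defs.top Z) \<in> carrier Y"
    using hom_snd_closed[OF g top_closed[OF Z]] .
  have "comp (down Y b) Y Z g (downmor Y b) = zero_mor (down Y b) Z \<longleftrightarrow>
      (\<forall>z\<in>carrier (down Y b). fst g z = Defs.top Z) \<and> (\<forall>w\<in>carrier Z. meet Y b (snd g w) = b)"
    unfolding comp_downmor_eq[OF Y g b] zero_mor_eq top_down[OF Y b]
    by (auto simp: fun_eq_iff)
  also have "\<dots> \<longleftrightarrow> le Y b (snd g (Defs.top Z))"
  proof
    assume "(\<forall>z\<in>carrier (down Y b). fst g z = Defs.top Z) \<and> (\<forall>w\<in>carrier Z. meet Y b (snd g w) = b)"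
    then have "meet Y b (snd g (Defs.top Z)) = b" using top_closed[OF Z] by blast
    then show "le Y b (snd g (Defs.top Z))" using meet_eq_left_iff[OF Y b gt] by simp
  next
    assume le: "le Y b (snd g (Defs.top Z))"
    have "fst g z = Defs.top Z" if "z \<in> carrier (down Y b)" for z
    proof -
      have z: "z \<in> carrier Y" "le Y z b" using that by (auto simp: down_def)
      then have "le Y z (snd g (Defs.top Z))" using oml_trans[OF Y z(1) b gt] le by blast
      then have "le Z (Defs.top Z) (fst g z)" using hom_galois[OF g z(1) top_closed[OF Z]] by blast
      then show ?thesis using top_le_imp_eq[OF Z hom_fst_closed[OF g z(1)]] by blast
    qed
    moreover have "meet Y b (snd g w) = b" if w: "w \<in> carrier Z" for w
    proof -
      have "le Y (snd g (Defs.top Z)) (snd g w)"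
        using hom_snd_antimono[OF g w top_closed[OF Z] le_top[OF Z w]] .
      then have "le Y b (snd g w)" using oml_trans[OF Y b gt hom_snd_closed[OF g w] le] by blast
      then show ?thesis using meet_eq_left_iff[OF Y b hom_snd_closed[OF g w]] by blast
    qed
    ultimately show "(\<forall>z\<in>carrier (down Y b). fst g z = Defs.top Z) \<and>
        (\<forall>w\<in>carrier Z. meet Y b (snd g w) = b)" by blast
  qed
  finally show ?thesis .
qed

lemma ker_el_eqI:
  assumes X: "is_oml X" and a: "a \<in> carrier X"
    and zero_iff: "\<And>b. b \<in> carrier X \<Longrightarrow>
      comp (down X b) X Y g (downmor X b) = zero_mor (down X b) Y \<longleftrightarrow> le X b a"
  shows "ker_el X Y g = a"
  unfolding ker_el_def
  by (rule the_equality) (use a zero_iff oml_refl[OF X a] oml_antisym[OF X _ a] in auto)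

lemma ker_el_hom:
  assumes Y: "is_oml Y" and Z: "bounded_poset Z" and g: "g \<in> hom Y Z"
  shows "ker_el Y Z g = snd g (Defs.top Z)"
  by (rule ker_el_eqI[OF Y hom_snd_closed[OF g top_closed[OF Z]]])
    (rule comp_downmor_eq_zero_iff[OF Y Z g])

lemma ex_im_eq:
  assumes X: "is_oml X" and Y: "is_oml Y" and f: "f \<in> hom X Y" and m: "m \<in> carrier X"
  shows "ex_im X Y f m = orth Y (fst f m)"
proof -
  let ?g = "comp (down X m) X Y f (downmor X m)"
  have "dagger ?g \<in> hom Y (down X m)"
    using dagger_hom[OF comp_hom[OF X downmor_hom[OF X m] f]] .
  then have "ker_el Y (down X m) (dagger ?g) = fst ?g m"
    using ker_el_hom[OF Y down_bounded_poset[OF X m]] top_down[OF X m] by (simp add: dagger_def)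
  also have "\<dots> = fst f m"
    using m oml_refl[OF X m] oml_orth_orth[OF X m] by (simp add: comp_def downmor_def down_def)
  finally have c: "ker_el Y (down X m) (dagger ?g) = fst f m" .
  have fm: "fst f m \<in> carrier Y" using hom_fst_closed[OF f m] .
  have "ker_el Y (down Y (fst f m)) (dagger (downmor Y (fst f m))) = orth Y (fst f m)"
    using ker_el_hom[OF Y down_bounded_poset[OF Y fm] dagger_hom[OF downmor_hom[OF Y fm]]]
      top_down[OF Y fm] fm oml_refl[OF Y fm]
    by (simp add: dagger_def downmor_def down_def)
  then show ?thesis unfolding ex_im_def Let_def c .
qed

lemma char_hom:
  assumes X: "is_oml X" and a: "a \<in> carrier X"
  shows "char X a \<in> hom two X"
proof (rule homI)
  have oa: "orth X a \<in> carrier X" using oml_orth_closed[OF X a] .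
  note top = top_closed[OF oml_bounded_poset[OF X]] le_top[OF oml_bounded_poset[OF X]]
  fix b :: bool
  show "fst (char X a) b \<in> carrier X" using oa top by (simp add: char_def)
  fix b' :: bool assume "le two b b'"
  then show "le X (fst (char X a) b') (fst (char X a) b)"
    using oa top oml_refl[OF X] by (cases b; cases b') (simp_all add: char_def two_def)
next
  fix x y assume "x \<in> carrier X" "y \<in> carrier X" "le X x y"
  then show "le two (snd (char X a) y) (snd (char X a) x)"
    using oml_trans[OF X _ _ oml_orth_closed[OF X a]] by (auto simp: char_def two_def)
next
  fix b :: bool and x assume x: "x \<in> carrier X"
  show "le X x (fst (char X a) b) \<longleftrightarrow> le two b (snd (char X a) x)"
    using x le_top[OF oml_bounded_poset[OF X] x] by (simp add: char_def two_def)
qed (simp_all add: char_def two_def)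

lemma hom_two_eq_char:
  assumes X: "is_oml X" and h: "h \<in> hom two X"
  shows "h = char X (orth X (fst h True))"
proof -
  have t: "fst h True \<in> carrier X" using hom_fst_closed[OF h] by (simp add: two_def)
  have galois: "le X x (fst h b) \<longleftrightarrow> (b \<longrightarrow> snd h x)" if "x \<in> carrier X" for x b
    using hom_galois[OF h _ that] by (simp add: two_def)
  have "Defs.top X = fst h False"
    by (rule top_eqI[OF oml_bounded_poset[OF X]])
      (use hom_fst_closed[OF h] galois in \<open>simp_all add: two_def\<close>)
  then show ?thesis
    using galois hom_snd_undefined[OF h] oml_orth_orth[OF X t]
    by (auto simp: char_def fun_eq_iff prod_eq_iff)
qed

lemma char_bij:
  assumes X: "is_oml X"
  shows "bij_betw (char X) (carrier X) (hom two X)"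
proof (rule bij_betw_byWitness[where f' = "\<lambda>h. orth X (fst h True)"])
  show "\<forall>a\<in>carrier X. orth X (fst (char X a) True) = a"
    using oml_orth_orth[OF X] by (simp add: char_def)
  show "\<forall>h\<in>hom two X. char X (orth X (fst h True)) = h"
    using hom_two_eq_char[OF X] by simp
  show "char X ` carrier X \<subseteq> hom two X"
    using char_hom[OF X] by blast
  show "(\<lambda>h. orth X (fst h True)) ` hom two X \<subseteq> carrier X"
    using hom_fst_closed oml_orth_closed[OF X] by (fastforce simp: two_def)
qed

lemma hom_fst_orth_top:
  assumes X: "is_oml X" and Y: "bounded_poset Y" and f: "f \<in> hom X Y"
  shows "fst f (orth X (Defs.top X)) = Defs.top Y"
proof -
  have bot: "orth X (Defs.top X) \<in> carrier X"
    using oml_orth_closed[OF X top_closed[OF oml_bounded_poset[OF X]]] .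
  have "le Y y (fst f (orth X (Defs.top X)))" if "y \<in> carrier Y" for y
    using hom_galois[OF f bot that] oml_orth_top_le[OF X hom_snd_closed[OF f that]] by blast
  then show ?thesis using top_eqI[OF Y hom_fst_closed[OF f bot]] by simp
qed

lemma comp_char:
  assumes X: "is_oml X" and Y: "is_oml Y" and f: "f \<in> hom X Y" and m: "m \<in> carrier X"
  shows "comp two X Y f (char X m) = char Y (orth Y (fst f m))"
proof -
  have le_iff: "le X (orth X (snd f y)) (orth X m) \<longleftrightarrow> le Y y (fst f m)" if "y \<in> carrier Y" for y
    using oml_orth_le_swap[OF X hom_snd_closed[OF f that] oml_orth_closed[OF X m]]
      oml_orth_orth[OF X m] hom_galois[OF f m that] by simp
  show ?thesis
    using le_iff hom_fst_orth_top[OF X oml_bounded_poset[OF Y] f] oml_orth_orth[OF X m]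
      oml_orth_orth[OF Y hom_fst_closed[OF f m]] oml_orth_closed[OF X] hom_snd_closed[OF f]
    by (auto simp: comp_def char_def two_def fun_eq_iff)
qed

theorem mainTheorem9:
  fixes X :: "'a oml" and Y :: "'b oml" and f :: "('a, 'b) mor"
  assumes "is_oml X" and "is_oml Y" and "f \<in> hom X Y"
  shows "bij_betw (char X) (carrier X) (hom two X) \<and>
         (\<forall>m\<in>carrier X. char Y (ex_im X Y f m) = comp two X Y f (char X m))"
  using char_bij[OF assms(1)] ex_im_eq[OF assms] comp_char[OF assms] by simp

end
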